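(* Let $\Bbbk$ be a field with $\operatorname{char}\Bbbk\neq 2$, and let $H_4^{(-)}$ be the Lie algebra defined in the context, with basis $1,g,e,f$. Let $L$ be a three-dimensional non-abelian Lie subalgebra of $H_4^{(-)}$. Then $L=\operatorname{span}(\alpha 1+g,e,f)$ for some $\alpha\in\Bbbk$, or $L=\operatorname{span}(1,g+\gamma e,f)$ for some $\gamma\in\Bbbk$, or $L=\operatorname{span}(1,g+\gamma f,e)$ for some $\gamma\in\Bbbk$. If moreover $L$ is an ideal of $H_4^{(-)}$, then $L=I:=\Bbbk 1+\Bbbk e+\Bbbk f$ or $L=J_\alpha:=\Bbbk(\alpha 1+g)+\Bbbk e+\Bbbk f$ for some $\alpha\in\Bbbk$.
   Context: $H_4$ is the Sweedler algebra over $\Bbbk$: the 4-dimensional associative unital algebra generated by $g,x$ with relations $g^2=1$, $x^2=0$, $xg=-gx$, with basis $1,g,x,gx$. $H_4^{(-)}$ is the Lie algebra on the vector space $H_4$ with bracket $[a,b]=ab-ba$. Put $e=x+gx$ and $f=x-gx$; then $1,g,e,f$ is a basis of $H_4$ and $[1,g]=[1,e]=[1,f]=0$, $[g,e]=2e$, $[g,f]=-2f$, $[e,f]=0$. *)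

theory Defs
  imports Main
begin

text \<open>The Sweedler algebra H4 over a field 'k, elements written in the basis 1, g, x, gx:
  H4c a b c d = a*1 + b*g + c*x + d*gx.\<close>

datatype 'k h4 = H4c 'k 'k 'k 'k

fun h4_add :: "'k::field h4 \<Rightarrow> 'k h4 \<Rightarrow> 'k h4" where
  "h4_add (H4c a b c d) (H4c a' b' c' d') = H4c (a + a') (b + b') (c + c') (d + d')"

fun h4_smult :: "'k::field \<Rightarrow> 'k h4 \<Rightarrow> 'k h4" where
  "h4_smult s (H4c a b c d) = H4c (s * a) (s * b) (s * c) (s * d)"

definition h4_zero :: "'k::field h4" where
  "h4_zero = H4c 0 0 0 0"

text \<open>Multiplication derived from g^2 = 1, x^2 = 0, xg = -gx (so g(gx) = x, (gx)g = -x,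
  x(gx) = (gx)x = (gx)(gx) = 0).\<close>
fun h4_mult :: "'k::field h4 \<Rightarrow> 'k h4 \<Rightarrow> 'k h4" where
  "h4_mult (H4c a b c d) (H4c a' b' c' d') =
     H4c (a * a' + b * b')
         (a * b' + b * a')
         (a * c' + c * a' + b * d' - d * b')
         (a * d' + d * a' + b * c' - c * b')"

definition h4_bracket :: "'k::field h4 \<Rightarrow> 'k h4 \<Rightarrow> 'k h4" where
  "h4_bracket u v = h4_add (h4_mult u v) (h4_smult (-1) (h4_mult v u))"

definition h4_one :: "'k::field h4" where "h4_one = H4c 1 0 0 0"
definition h4_g :: "'k::field h4" where "h4_g = H4c 0 1 0 0"
definition h4_x :: "'k::field h4" where "h4_x = H4c 0 0 1 0"
definition h4_gx :: "'k::field h4" where "h4_gx = H4c 0 0 0 1"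

definition h4_e :: "'k::field h4" where "h4_e = h4_add h4_x h4_gx"
definition h4_f :: "'k::field h4" where "h4_f = h4_add h4_x (h4_smult (-1) h4_gx)"

definition span3 :: "'k::field h4 \<Rightarrow> 'k h4 \<Rightarrow> 'k h4 \<Rightarrow> 'k h4 set" where
  "span3 u v w = {h4_add (h4_add (h4_smult \<alpha> u) (h4_smult \<beta> v)) (h4_smult \<gamma> w) | \<alpha> \<beta> \<gamma>. True}"

definition lin_indep3 :: "'k::field h4 \<Rightarrow> 'k h4 \<Rightarrow> 'k h4 \<Rightarrow> bool" where
  "lin_indep3 u v w \<longleftrightarrow> (\<forall>\<alpha> \<beta> \<gamma>.
     h4_add (h4_add (h4_smult \<alpha> u) (h4_smult \<beta> v)) (h4_smult \<gamma> w) = h4_zero \<longrightarrow>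
     \<alpha> = 0 \<and> \<beta> = 0 \<and> \<gamma> = 0)"

definition dim3_subspace :: "'k::field h4 set \<Rightarrow> bool" where
  "dim3_subspace L \<longleftrightarrow> (\<exists>u v w. lin_indep3 u v w \<and> L = span3 u v w)"

definition lie_subalgebra :: "'k::field h4 set \<Rightarrow> bool" where
  "lie_subalgebra L \<longleftrightarrow> h4_zero \<in> L \<and>
     (\<forall>u\<in>L. \<forall>v\<in>L. h4_add u v \<in> L) \<and>
     (\<forall>s. \<forall>u\<in>L. h4_smult s u \<in> L) \<and>
     (\<forall>u\<in>L. \<forall>v\<in>L. h4_bracket u v \<in> L)"

definition non_abelian :: "'k::field h4 set \<Rightarrow> bool" where
  "non_abelian L \<longleftrightarrow> (\<exists>u\<in>L. \<exists>v\<in>L. h4_bracket u v \<noteq> h4_zero)"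

definition lie_ideal :: "'k::field h4 set \<Rightarrow> bool" where
  "lie_ideal L \<longleftrightarrow> lie_subalgebra L \<and> (\<forall>h. \<forall>u\<in>L. h4_bracket h u \<in> L)"

end

theory Submission
  imports Defs HOL.Vector_Spaces
begin

text \<open>A non-abelian subalgebra L contains an element p = a 1 + g + c x + d gx, and
  [p, s 1 + \<alpha> e + \<beta> f] = 2\<alpha> e - 2\<beta> f: ad p is diagonal on span {1, e, f} with eigenvalues
  0, 2, -2, which are distinct when char \<noteq> 2. Hence L is spanned by p together with those of
  1, e, f that lie in L. As {p, 1, e, f} is independent and dim L = 3, exactly two of them do,
  which gives the three families. If L is an ideal, [e, p] = -2e and [f, p] = 2f put e and f
  in L, so L is of the first kind.\<close>

lemma (in vector_space) span_insert_translate: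
  assumes "p - q \<in> span S"
  shows "span (insert p S) = span (insert q S)"
proof -
  have shift: "insert x S \<subseteq> span (insert y S)" if "x - y \<in> span S" for x y
  proof -
    have "x - y \<in> span (insert y S)" using that span_mono by blast
    then have "(x - y) + y \<in> span (insert y S)" by (meson span_add span_base insertI1)
    then show ?thesis using span_superset[of "insert y S"] by auto
  qed
  have "q - p \<in> span S" using span_neg[OF assms] by simp
  then show ?thesis using shift assms by (simp add: span_eq)
qed

lemma card_two_subset_of_three:
  assumes "B \<subseteq> {a, b, c}" and "card B = 2"
  shows "B = {b, c} \<or> B = {a, c} \<or> B = {a, b}"
  using assms by (auto simp: card_2_iff)

instantiation h4 :: (field) ab_group_add
begin

definition zero_h4 :: "'a h4" where "zero_h4 = h4_zero"
definition plus_h4 :: "'a h4 \<Rightarrow> 'a h4 \<Rightarrow> 'a h4" where "plus_h4 = h4_add"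
definition uminus_h4 :: "'a h4 \<Rightarrow> 'a h4" where "uminus_h4 = h4_smult (-1)"
definition minus_h4 :: "'a h4 \<Rightarrow> 'a h4 \<Rightarrow> 'a h4" where "minus_h4 u v = u + - v"

lemma zero_h4_H4c: "0 = H4c 0 0 0 0"
  by (simp add: zero_h4_def h4_zero_def)

lemma h4_ops_H4c [simp]:
  "H4c a b c d + H4c a' b' c' d' = H4c (a + a') (b + b') (c + c') (d + d')"
  "- H4c a b c d = H4c (- a) (- b) (- c) (- d)"
  "H4c a b c d - H4c a' b' c' d' = H4c (a - a') (b - b') (c - c') (d - d')"
  by (simp_all add: plus_h4_def uminus_h4_def minus_h4_def)

instance
proof
  fix u v w :: "'a h4"
  show "u + v + w = u + (v + w)" by (cases u; cases v; cases w) (simp add: ac_simps)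
  show "u + v = v + u" by (cases u; cases v) (simp add: ac_simps)
  show "0 + u = u" by (cases u) (simp add: zero_h4_H4c)
  show "- u + u = 0" by (cases u) (simp add: zero_h4_H4c)
  show "u - v = u + - v" by (cases u; cases v) simp
qed

end

global_interpretation h4: vector_space "h4_smult :: 'k::field \<Rightarrow> 'k h4 \<Rightarrow> 'k h4"
  defines h4_span_def: h4_span = h4.span
    and h4_subspace_def: h4_subspace = h4.subspace
    and h4_dependent_def: h4_dependent = h4.dependent
    and h4_dim_def: h4_dim = h4.dim
proof
  fix a b :: 'k and x y :: "'k h4"
  show "h4_smult a (x + y) = h4_smult a x + h4_smult a y"
    by (cases x; cases y) (simp add: algebra_simps)
  show "h4_smult (a + b) x = h4_smult a x + h4_smult b x"
    by (cases x) (simp add: algebra_simps)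
  show "h4_smult a (h4_smult b x) = h4_smult (a * b) x"
    by (cases x) (simp add: algebra_simps)
  show "h4_smult 1 x = x"
    by (cases x) simp
qed

lemma h4_add_eq_plus: "h4_add u v = u + v"
  by (simp add: plus_h4_def)

lemma h4_zero_eq_zero: "h4_zero = 0"
  by (simp only: zero_h4_def)

lemma h4_basis_H4c:
  "h4_one = H4c 1 0 0 0" "h4_g = H4c 0 1 0 0" "h4_e = H4c 0 0 1 1" "h4_f = H4c 0 0 1 (-1)"
  by (simp_all add: h4_one_def h4_g_def h4_e_def h4_f_def h4_x_def h4_gx_def)

lemma H4c_basis_expansion:
  fixes a b c d :: "'k::field"
  assumes "(2::'k) \<noteq> 0"
  shows "H4c a b c d = h4_smult a h4_one + h4_smult b h4_g
      + h4_smult ((c + d) / 2) h4_e + h4_smult ((c - d) / 2) h4_f"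
proof -
  have "(c + d) / 2 + (c - d) / 2 = c" "(c + d) / 2 - (c - d) / 2 = d"
    using assms by (simp_all flip: add_divide_distrib diff_divide_distrib mult_2)
  then show ?thesis by (simp add: h4_basis_H4c)
qed

lemma span3_eq_span: "span3 u v w = h4_span {u, v, w}"
  unfolding span3_def h4_add_eq_plus
  by (auto simp: set_eq_iff h4.span_breakdown_eq diff_eq_eq ac_simps)

lemma lie_subalgebra_subspace: "lie_subalgebra L \<Longrightarrow> h4_subspace L"
  by (simp add: lie_subalgebra_def h4.subspace_def h4_add_eq_plus h4_zero_eq_zero)

lemma lin_indep3_independent:
  assumes "lin_indep3 u v w"
  shows "\<not> h4_dependent {u, v, w}" and "card {u, v, w} = 3"
proof -
  have indep: "a = 0 \<and> b = 0 \<and> c = 0" if "h4_smult a u + h4_smult b v + h4_smult c w = 0" for a b c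
    using assms that by (simp add: lin_indep3_def h4_add_eq_plus h4_zero_eq_zero)
  have "u \<noteq> v" using indep[of 1 "-1" 0] by (auto simp: h4.scale_left_diff_distrib)
  moreover have "u \<noteq> w" using indep[of 1 0 "-1"] by auto
  moreover have "v \<noteq> w" using indep[of 0 1 "-1"] by auto
  ultimately show "card {u, v, w} = 3" by simp
  show "\<not> h4_dependent {u, v, w}"
    using \<open>u \<noteq> v\<close> \<open>u \<noteq> w\<close> \<open>v \<noteq> w\<close> indep by (auto simp: h4.dependent_finite add.assoc)
qed

lemma dim3_subspace_dim: "dim3_subspace L \<Longrightarrow> h4_dim L = 3"
  unfolding dim3_subspace_def span3_eq_span
  using lin_indep3_independent h4.dim_span_eq_card_independent by metis

lemma h4_bracket_H4c:
  "h4_bracket (H4c a b c d) (H4c a' b' c' d') = H4c 0 0 (2 * (b * d' - d * b')) (2 * (b * c' - c * b'))"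
  by (simp add: h4_bracket_def algebra_simps mult_2)

lemma non_abelian_has_g_element:
  assumes sub: "lie_subalgebra L" and nab: "non_abelian L"
  obtains pa pc pd where "H4c pa 1 pc pd \<in> L"
proof -
  obtain u v where uv: "u \<in> L" "v \<in> L" "h4_bracket u v \<noteq> h4_zero"
    using nab unfolding non_abelian_def by blast
  have "\<exists>a b c d. b \<noteq> 0 \<and> H4c a b c d \<in> L"
  proof (cases u; cases v)
    fix a b c d a' b' c' d'
    assume u: "u = H4c a b c d" and v: "v = H4c a' b' c' d'"
    then have "b \<noteq> 0 \<or> b' \<noteq> 0" using uv(3) by (auto simp: h4_bracket_H4c h4_zero_def)
    then show ?thesis using uv(1,2) u v by blast
  qed
  then obtain a b c d where "b \<noteq> 0" "H4c a b c d \<in> L" by blast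
  then have "h4_smult (1 / b) (H4c a b c d) \<in> L"
    using sub unfolding lie_subalgebra_def by blast
  then show ?thesis using that \<open>b \<noteq> 0\<close> by simp
qed

lemma bracket_g_element_diagonal:
  "h4_bracket (H4c a 1 c d) (h4_smult s h4_one + h4_smult \<alpha> h4_e + h4_smult \<beta> h4_f)
     = h4_smult (2 * \<alpha>) h4_e + h4_smult (- 2 * \<beta>) h4_f"
  "h4_bracket (H4c a 1 c d) (h4_smult \<alpha> h4_e + h4_smult \<beta> h4_f)
     = h4_smult (2 * \<alpha>) h4_e + h4_smult (- 2 * \<beta>) h4_f"
  by (simp_all add: h4_bracket_H4c h4_basis_H4c algebra_simps)

lemma subalgebra_eigencomponents:
  fixes L :: "'k::field h4 set"
  assumes char: "(2::'k) \<noteq> 0" and sub: "lie_subalgebra L" and p: "H4c a 1 c d \<in> L"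
    and q: "h4_smult s h4_one + h4_smult \<alpha> h4_e + h4_smult \<beta> h4_f \<in> L"
  shows "h4_smult \<alpha> h4_e \<in> L" and "h4_smult \<beta> h4_f \<in> L" and "h4_smult s h4_one \<in> L"
proof -
  have L: "h4_subspace L"
    using sub by (rule lie_subalgebra_subspace)
  have half_bracket: "h4_smult (1/2) (h4_bracket (H4c a 1 c d) v) \<in> L" if "v \<in> L" for v
    using sub p that L by (simp add: lie_subalgebra_def h4.subspace_scale)
  have "h4_smult \<alpha> h4_e + h4_smult (- \<beta>) h4_f
      = h4_smult (1/2) (h4_bracket (H4c a 1 c d) (h4_smult s h4_one + h4_smult \<alpha> h4_e + h4_smult \<beta> h4_f))"
    unfolding bracket_g_element_diagonal using char by (simp add: h4_basis_H4c)
  then have minus: "h4_smult \<alpha> h4_e + h4_smult (- \<beta>) h4_f \<in> L"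
    using half_bracket[OF q] by simp
  have "h4_smult \<alpha> h4_e + h4_smult \<beta> h4_f
      = h4_smult (1/2) (h4_bracket (H4c a 1 c d) (h4_smult \<alpha> h4_e + h4_smult (- \<beta>) h4_f))"
    unfolding bracket_g_element_diagonal using char by (simp add: h4_basis_H4c)
  then have plus: "h4_smult \<alpha> h4_e + h4_smult \<beta> h4_f \<in> L"
    using half_bracket[OF minus] by simp
  have e: "h4_smult \<alpha> h4_e = h4_smult (1/2)
      ((h4_smult \<alpha> h4_e + h4_smult (- \<beta>) h4_f) + (h4_smult \<alpha> h4_e + h4_smult \<beta> h4_f))"
    using char by (simp add: h4_basis_H4c field_simps)
  show "h4_smult \<alpha> h4_e \<in> L"
    by (subst e) (intro h4.subspace_scale h4.subspace_add L minus plus)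
  have f: "h4_smult \<beta> h4_f = h4_smult (1/2)
      ((h4_smult \<alpha> h4_e + h4_smult \<beta> h4_f) - (h4_smult \<alpha> h4_e + h4_smult (- \<beta>) h4_f))"
    using char by (simp add: h4_basis_H4c field_simps)
  show "h4_smult \<beta> h4_f \<in> L"
    by (subst f) (intro h4.subspace_scale h4.subspace_diff L minus plus)
  have one: "h4_smult s h4_one
      = (h4_smult s h4_one + h4_smult \<alpha> h4_e + h4_smult \<beta> h4_f) - (h4_smult \<alpha> h4_e + h4_smult \<beta> h4_f)"
    by (simp add: algebra_simps)
  show "h4_smult s h4_one \<in> L"
    by (subst one) (intro h4.subspace_diff L q plus)
qed

lemma subalgebra_eq_span:
  fixes L :: "'k::field h4 set"
  assumes char: "(2::'k) \<noteq> 0" and sub: "lie_subalgebra L" and p: "H4c pa 1 pc pd \<in> L"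
  shows "L = h4_span (insert (H4c pa 1 pc pd) {v \<in> {h4_one, h4_e, h4_f}. v \<in> L})"
    (is "L = h4_span ?A")
proof -
  have L: "h4_subspace L"
    using sub by (rule lie_subalgebra_subspace)
  have component: "h4_smult c v \<in> h4_span ?A" if "h4_smult c v \<in> L" "v \<in> {h4_one, h4_e, h4_f}" for c v
  proof (cases "c = 0")
    case True
    then show ?thesis by (simp add: h4.span_zero)
  next
    case False
    then have "v = h4_smult (1 / c) (h4_smult c v)" by simp
    then have "v \<in> L" using L that(1) by (metis h4.subspace_scale)
    then show ?thesis using that(2) by (intro h4.span_scale h4.span_base) simp
  qed
  have "L \<subseteq> h4_span ?A"
  proof
    fix y assume y: "y \<in> L"
    obtain a b c d where y_def: "y = H4c a b c d" by (cases y)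
    define s t r where "s = a - b * pa" and "t = c - b * pc" and "r = d - b * pd"
    have "y - h4_smult b (H4c pa 1 pc pd) = H4c s 0 t r"
      by (simp add: y_def s_def t_def r_def)
    also have "\<dots> = h4_smult s h4_one + h4_smult ((t + r) / 2) h4_e + h4_smult ((t - r) / 2) h4_f"
      using H4c_basis_expansion[OF char, of s 0 t r] by simp
    finally have q: "y - h4_smult b (H4c pa 1 pc pd)
        = h4_smult s h4_one + h4_smult ((t + r) / 2) h4_e + h4_smult ((t - r) / 2) h4_f" .
    have "y - h4_smult b (H4c pa 1 pc pd) \<in> L"
      using L y p by (intro h4.subspace_diff h4.subspace_scale)
    then have "y - h4_smult b (H4c pa 1 pc pd) \<in> h4_span ?A"
      unfolding q using subalgebra_eigencomponents[OF char sub p]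
      by (intro h4.span_add component) simp_all
    moreover have "h4_smult b (H4c pa 1 pc pd) \<in> h4_span ?A"
      by (intro h4.span_scale h4.span_base) simp
    ultimately have "(y - h4_smult b (H4c pa 1 pc pd)) + h4_smult b (H4c pa 1 pc pd) \<in> h4_span ?A"
      by (rule h4.span_add)
    then show "y \<in> h4_span ?A" by simp
  qed
  moreover have "?A \<subseteq> L" using p by auto
  ultimately show ?thesis
    using h4.span_subspace L by blast
qed

lemma independent_g_element_one_e_f:
  fixes pa pc pd :: "'k::field"
  assumes char: "(2::'k) \<noteq> 0"
  shows "\<not> h4_dependent {H4c pa 1 pc pd, h4_one, h4_e, h4_f}"
proof
  let ?p = "H4c pa 1 pc pd"
  assume "h4_dependent {?p, h4_one, h4_e, h4_f}"
  then obtain c where nonzero: "\<exists>v\<in>{?p, h4_one, h4_e, h4_f}. c v \<noteq> 0"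
    and sum: "(\<Sum>v\<in>{?p, h4_one, h4_e, h4_f}. h4_smult (c v) v) = 0"
    by (auto simp: h4.dependent_finite)
  have "(1::'k) \<noteq> - 1" using char by (metis one_add_one add_eq_0_iff)
  then have "(\<Sum>v\<in>{?p, h4_one, h4_e, h4_f}. h4_smult (c v) v)
      = H4c (c ?p * pa + c h4_one) (c ?p) (c ?p * pc + c h4_e + c h4_f) (c ?p * pd + c h4_e - c h4_f)"
    by (simp add: h4_basis_H4c zero_h4_H4c algebra_simps)
  then have coords: "H4c (c ?p * pa + c h4_one) (c ?p) (c ?p * pc + c h4_e + c h4_f) (c ?p * pd + c h4_e - c h4_f)
      = H4c 0 0 0 0"
    using sum by (simp only: zero_h4_H4c)
  then have "c ?p = 0" by simp
  moreover from this have "c h4_one = 0" and sum_ef: "c h4_e + c h4_f = 0" and diff_ef: "c h4_e - c h4_f = 0"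
    using coords by (simp_all only: h4.inject mult_zero_left add_0_left)
  moreover have "2 * c h4_e = (c h4_e + c h4_f) + (c h4_e - c h4_f)"
    by (simp add: algebra_simps mult_2)
  then have "c h4_e = 0"
    using sum_ef diff_ef char by simp
  moreover from this have "c h4_f = 0"
    using sum_ef by simp
  ultimately show False using nonzero by auto
qed

lemma dim3_subalgebra_eigenvectors:
  fixes L :: "'k::field h4 set"
  assumes char: "(2::'k) \<noteq> 0" and sub: "lie_subalgebra L" and dim: "dim3_subspace L"
    and p: "H4c pa 1 pc pd \<in> L"
  shows "{v \<in> {h4_one, h4_e, h4_f}. v \<in> L} \<in> {{h4_e, h4_f}, {h4_one, h4_f}, {h4_one, h4_e}}"
proof -
  define B where "B = {v \<in> {h4_one, h4_e, h4_f}. v \<in> L}"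
  have "\<not> h4_dependent (insert (H4c pa 1 pc pd) B)"
    using independent_g_element_one_e_f[OF char] by (rule h4.independent_mono) (auto simp: B_def)
  then have "card (insert (H4c pa 1 pc pd) B) = 3"
    using subalgebra_eq_span[OF char sub p] dim3_subspace_dim[OF dim]
    by (metis B_def h4.dim_span_eq_card_independent)
  moreover have "H4c pa 1 pc pd \<notin> B"
    by (auto simp: B_def h4_basis_H4c)
  ultimately have "card B = 2"
    by (simp add: B_def)
  then show ?thesis
    using card_two_subset_of_three[of B] by (auto simp: B_def)
qed

lemma span_with_g_element:
  fixes pa pc pd :: "'k::field"
  assumes char: "(2::'k) \<noteq> 0"
  defines "\<gamma>\<^sub>e \<equiv> (pc + pd) / 2" and "\<gamma>\<^sub>f \<equiv> (pc - pd) / 2"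
  shows "h4_span {H4c pa 1 pc pd, h4_e, h4_f} = span3 (h4_add (h4_smult pa h4_one) h4_g) h4_e h4_f"
    and "h4_span {H4c pa 1 pc pd, h4_one, h4_f} = span3 h4_one (h4_add h4_g (h4_smult \<gamma>\<^sub>e h4_e)) h4_f"
    and "h4_span {H4c pa 1 pc pd, h4_one, h4_e} = span3 h4_one (h4_add h4_g (h4_smult \<gamma>\<^sub>f h4_f)) h4_e"
proof -
  have p: "H4c pa 1 pc pd = h4_smult pa h4_one + h4_g + h4_smult \<gamma>\<^sub>e h4_e + h4_smult \<gamma>\<^sub>f h4_f"
    using H4c_basis_expansion[OF char, of pa 1 pc pd] by (simp add: \<gamma>\<^sub>e_def \<gamma>\<^sub>f_def)
  have "H4c pa 1 pc pd - (h4_smult pa h4_one + h4_g) \<in> h4_span {h4_e, h4_f}"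
    unfolding p by (simp add: h4.span_add h4.span_scale h4.span_base)
  then show "h4_span {H4c pa 1 pc pd, h4_e, h4_f} = span3 (h4_add (h4_smult pa h4_one) h4_g) h4_e h4_f"
    unfolding span3_eq_span h4_add_eq_plus by (rule h4.span_insert_translate)
  have "H4c pa 1 pc pd - (h4_g + h4_smult \<gamma>\<^sub>e h4_e) \<in> h4_span {h4_one, h4_f}"
    unfolding p by (simp add: h4.span_add h4.span_scale h4.span_base)
  then show "h4_span {H4c pa 1 pc pd, h4_one, h4_f} = span3 h4_one (h4_add h4_g (h4_smult \<gamma>\<^sub>e h4_e)) h4_f"
    unfolding span3_eq_span h4_add_eq_plus insert_commute[of h4_one]
    by (rule h4.span_insert_translate)
  have "H4c pa 1 pc pd - (h4_g + h4_smult \<gamma>\<^sub>f h4_f) \<in> h4_span {h4_one, h4_e}"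
    unfolding p by (simp add: h4.span_add h4.span_scale h4.span_base)
  then show "h4_span {H4c pa 1 pc pd, h4_one, h4_e} = span3 h4_one (h4_add h4_g (h4_smult \<gamma>\<^sub>f h4_f)) h4_e"
    unfolding span3_eq_span h4_add_eq_plus insert_commute[of h4_one]
    by (rule h4.span_insert_translate)
qed

lemma lie_ideal_contains_e_f:
  fixes L :: "'k::field h4 set"
  assumes char: "(2::'k) \<noteq> 0" and ideal: "lie_ideal L" and p: "H4c pa 1 pc pd \<in> L"
  shows "h4_e \<in> L" and "h4_f \<in> L"
proof -
  have scaled_bracket: "h4_smult c (h4_bracket h (H4c pa 1 pc pd)) \<in> L" for c h
    using ideal p unfolding lie_ideal_def lie_subalgebra_def by blast
  have "h4_e = h4_smult (- 1 / 2) (h4_bracket h4_e (H4c pa 1 pc pd))"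
    using char by (simp add: h4_bracket_H4c h4_basis_H4c)
  then show "h4_e \<in> L" using scaled_bracket by metis
  have "h4_f = h4_smult (1 / 2) (h4_bracket h4_f (H4c pa 1 pc pd))"
    using char by (simp add: h4_bracket_H4c h4_basis_H4c)
  then show "h4_f \<in> L" using scaled_bracket by metis
qed

theorem mainTheorem3:
  fixes L :: "'k::field h4 set"
  assumes char: "(2::'k) \<noteq> 0"
    and sub: "lie_subalgebra L"
    and dim: "dim3_subspace L"
    and nab: "non_abelian L"
  shows "((\<exists>\<alpha>. L = span3 (h4_add (h4_smult \<alpha> h4_one) h4_g) h4_e h4_f)
          \<or> (\<exists>\<gamma>. L = span3 h4_one (h4_add h4_g (h4_smult \<gamma> h4_e)) h4_f)
          \<or> (\<exists>\<gamma>. L = span3 h4_one (h4_add h4_g (h4_smult \<gamma> h4_f)) h4_e))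
       \<and> (lie_ideal L \<longrightarrow>
            (L = span3 h4_one h4_e h4_f
             \<or> (\<exists>\<alpha>. L = span3 (h4_add (h4_smult \<alpha> h4_one) h4_g) h4_e h4_f)))"
proof -
  obtain pa pc pd where p: "H4c pa 1 pc pd \<in> L"
    using non_abelian_has_g_element[OF sub nab] .
  define B where "B = {v \<in> {h4_one, h4_e, h4_f}. v \<in> L}"
  have L: "L = h4_span (insert (H4c pa 1 pc pd) B)"
    unfolding B_def by (rule subalgebra_eq_span[OF char sub p])
  have B: "B \<in> {{h4_e, h4_f}, {h4_one, h4_f}, {h4_one, h4_e}}"
    unfolding B_def by (rule dim3_subalgebra_eigenvectors[OF char sub dim p])
  have "B = {h4_e, h4_f}" if "lie_ideal L"
  proof -
    have "h4_e \<in> B" "h4_f \<in> B"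
      using lie_ideal_contains_e_f[OF char that p] by (simp_all add: B_def)
    then show ?thesis
      using B char by (auto simp: h4_basis_H4c eq_neg_iff_add_eq_0)
  qed
  then show ?thesis
    using B L span_with_g_element[OF char] by auto
qed

end
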